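(* Let $q\in\mathbb C$ with $|q|=1$, $q^2\neq1$, and let $A,B$ be self-adjoint operators on a Hilbert space $\mathcal H$. Suppose $\mu,\mu q,\mu q^2\in\rho(B)$, $R_\mu(B)A\subseteq qAR_{\mu q}(B)$ and $R_{\mu q}(B)A\subseteq qAR_{\mu q^2}(B)$. Then $\mathcal D_{q^2}(A^2,B)$ is a core for $B$.
   Context: $\rho(T)$ denotes the resolvent set and $R_\lambda(T)=(T-\lambda I)^{-1}$ the resolvent of a closed operator $T$; $S\subseteq T$ means $T$ extends $S$; products of unbounded operators have their natural domains. For self-adjoint $X,Y$ and a complex number $p$, $\mathcal D_p(X,Y):=\{f\in\mathcal D(YX)\cap\mathcal D(XY): XYf=pYXf\}$; thus $\mathcal D_{q^2}(A^2,B)=\{f\in\mathcal D(BA^2)\cap\mathcal D(A^2B): A^2Bf=q^2BA^2f\}$. *)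

theory Defs
  imports "HOL-Analysis.Analysis"
begin

text \<open>Complex inner product spaces (complex Hilbert spaces are the instances that are
  also complete_space). The inner product is linear in the second argument.\<close>

class complex_inner = real_normed_vector +
  fixes scaleC :: "complex \<Rightarrow> 'a \<Rightarrow> 'a"
    and cinner :: "'a \<Rightarrow> 'a \<Rightarrow> complex"
  assumes scaleC_add_right: "scaleC a (x + y) = scaleC a x + scaleC a y"
    and scaleC_add_left: "scaleC (a + b) x = scaleC a x + scaleC b x"
    and scaleC_scaleC: "scaleC a (scaleC b x) = scaleC (a * b) x"
    and scaleC_one: "scaleC 1 x = x"
    and scaleR_scaleC: "scaleR r x = scaleC (complex_of_real r) x"
    and cinner_commute: "cinner x y = cnj (cinner y x)"
    and cinner_add_right: "cinner x (y + z) = cinner x y + cinner x z"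
    and cinner_scaleC_right: "cinner x (scaleC a y) = a * cinner x y"
    and cinner_eq_zero: "cinner x x = 0 \<longleftrightarrow> x = 0"
    and norm_cinner: "norm x = sqrt (Re (cinner x x))"

text \<open>(Possibly unbounded) operators are represented by their graphs.
  Thus S \<subseteq> T means that T extends S, Domain T is the domain of T.\<close>

type_synonym 'a op = "('a \<times> 'a) set"

text \<open>Product XY with its natural domain: first apply Y, then X.\<close>
definition op_comp :: "'a op \<Rightarrow> 'a op \<Rightarrow> 'a op" where
  "op_comp X Y = Y O X"

definition op_smult :: "complex \<Rightarrow> ('a::complex_inner) op \<Rightarrow> 'a op" where
  "op_smult c X = {(f, scaleC c g) | f g. (f, g) \<in> X}"

definition op_shift :: "('a::complex_inner) op \<Rightarrow> complex \<Rightarrow> 'a op" where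
  "op_shift T lam = {(f, g - scaleC lam f) | f g. (f, g) \<in> T}"

definition resolvent :: "('a::complex_inner) op \<Rightarrow> complex \<Rightarrow> 'a op" where
  "resolvent T lam = converse (op_shift T lam)"

definition resolvent_set :: "('a::complex_inner) op \<Rightarrow> complex set" where
  "resolvent_set T = {lam. Domain (resolvent T lam) = UNIV
      \<and> single_valued (resolvent T lam)
      \<and> (\<exists>K. \<forall>(f, g) \<in> resolvent T lam. norm g \<le> K * norm f)}"

definition adjoint :: "('a::complex_inner) op \<Rightarrow> 'a op" where
  "adjoint T = {(g, h). \<forall>(f, k) \<in> T. cinner k g = cinner f h}"

definition self_adjoint :: "('a::complex_inner) op \<Rightarrow> bool" where
  "self_adjoint T \<longleftrightarrow> closure (Domain T) = UNIV \<and> adjoint T = T"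

definition Dp :: "complex \<Rightarrow> ('a::complex_inner) op \<Rightarrow> 'a op \<Rightarrow> 'a set" where
  "Dp p X Y = {f. \<exists>g h. (f, g) \<in> op_comp X Y \<and> (f, h) \<in> op_comp Y X \<and> g = scaleC p h}"

definition is_core :: "'a set \<Rightarrow> ('a::complex_inner) op \<Rightarrow> bool" where
  "is_core D T \<longleftrightarrow> D \<subseteq> Domain T \<and> closure {(f, g) \<in> T. f \<in> D} = T"

end

theory Submission
  imports Defs
begin

text \<open>Put \<open>\<lambda> = \<mu> q^2\<close>. The two inclusions say that \<open>A R_(\<alpha> q)(B) f = q^-1 R_\<alpha>(B) A f\<close>
  for \<open>f \<in> D(A)\<close> and \<open>\<alpha> = \<mu>, \<mu> q\<close>. Applied twice to \<open>f \<in> D(A^2)\<close> they show that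
  \<open>x = R_\<lambda>(B) f\<close> satisfies \<open>A^2 x = q^-2 R_\<mu>(B) A^2 f\<close>, and together with \<open>B x = f + \<lambda> x\<close>
  this gives \<open>A^2 B x = q^2 B A^2 x\<close>: the resolvent \<open>R_\<lambda>(B)\<close> maps \<open>D(A^2)\<close> into
  \<open>D_(q^2)(A^2, B)\<close>. As \<open>A\<close> is self-adjoint, \<open>A + i\<close> is onto and \<open>|(A + i) u| \<ge> |u|\<close>,
  which makes \<open>D(A^2)\<close> dense; and \<open>R_\<lambda>(B)\<close> is a homeomorphism of the space onto the
  graph of \<open>B\<close>, so it carries dense sets to cores.\<close>

section \<open>Complex inner product spaces\<close>

lemma scaleC_of_real: "scaleC (complex_of_real r) x = r *\<^sub>R (x::'a::complex_inner)"
  by (simp add: scaleR_scaleC)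

lemma scaleC_zero_left[simp]: "scaleC 0 (x::'a::complex_inner) = 0"
  using scaleC_of_real[of 0 x] by simp

lemma scaleC_zero_right[simp]: "scaleC a (0::'a::complex_inner) = 0"
proof -
  have "scaleC a (0::'a) = scaleC a 0 + scaleC a 0" using scaleC_add_right[of a 0 0] by simp
  thus ?thesis by simp
qed

lemma scaleC_minus1: "scaleC (-1) (x::'a::complex_inner) = - x"
  using scaleC_of_real[of "-1" x] by simp

lemma scaleC_minus_right: "scaleC a (- x) = - scaleC a (x::'a::complex_inner)"
proof -
  have "scaleC a (- x) = scaleC a (scaleC (-1) x)" by (simp add: scaleC_minus1)
  also have "\<dots> = scaleC (-1) (scaleC a x)" by (simp add: scaleC_scaleC)
  finally show ?thesis by (simp add: scaleC_minus1)
qed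

lemma scaleC_minus_left: "scaleC (- a) x = - scaleC a (x::'a::complex_inner)"
proof -
  have "scaleC (- a) x = scaleC (-1) (scaleC a x)" by (simp add: scaleC_scaleC)
  thus ?thesis by (simp add: scaleC_minus1)
qed

lemma scaleC_diff_right: "scaleC a (x - y) = scaleC a x - scaleC a (y::'a::complex_inner)"
  by (simp only: diff_conv_add_uminus scaleC_add_right scaleC_minus_right)

lemma cinner_zero_right[simp]: "cinner x (0::'a::complex_inner) = 0"
proof -
  have "cinner x (0::'a) = cinner x 0 + cinner x 0" using cinner_add_right[of x 0 0] by simp
  thus ?thesis by simp
qed

lemma cinner_zero_left[simp]: "cinner (0::'a::complex_inner) x = 0"
  by (subst cinner_commute) simp

lemma cinner_add_left: "cinner (x + y) z = cinner x z + cinner y (z::'a::complex_inner)"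
  by (subst (1 2 3) cinner_commute) (simp add: cinner_add_right)

lemma cinner_scaleC_left: "cinner (scaleC a x) y = cnj a * cinner x (y::'a::complex_inner)"
  by (subst (1 2) cinner_commute) (simp add: cinner_scaleC_right)

lemma cinner_minus_right: "cinner x (- y) = - cinner x (y::'a::complex_inner)"
  using cinner_scaleC_right[of x "-1" y] by (simp add: scaleC_minus1)

lemma cinner_minus_left: "cinner (- x) y = - cinner x (y::'a::complex_inner)"
  by (subst (1 2) cinner_commute) (simp add: cinner_minus_right)

lemma cinner_diff_right: "cinner x (y - z) = cinner x y - cinner x (z::'a::complex_inner)"
  by (simp only: diff_conv_add_uminus cinner_add_right cinner_minus_right)

lemma cinner_diff_left: "cinner (x - y) z = cinner x z - cinner y (z::'a::complex_inner)"
  by (simp only: diff_conv_add_uminus cinner_add_left cinner_minus_left)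

lemma cinner_scaleR_right: "cinner x (r *\<^sub>R y) = complex_of_real r * cinner x (y::'a::complex_inner)"
  by (simp add: scaleR_scaleC cinner_scaleC_right)

lemma cinner_self_Im: "Im (cinner x (x::'a::complex_inner)) = 0"
  using arg_cong[OF cinner_commute[of x x], of Im] by simp

lemma cinner_self_Re: "norm x ^ 2 = Re (cinner x (x::'a::complex_inner))"
proof -
  have "Re (cinner x x) \<ge> 0"
  proof (rule ccontr)
    assume "\<not> ?thesis"
    hence "sqrt (Re (cinner x x)) < 0" by simp
    thus False using norm_cinner[of x] norm_ge_zero[of x] by simp
  qed
  thus ?thesis using norm_cinner[of x] by simp
qed

lemma cinner_self: "cinner x (x::'a::complex_inner) = complex_of_real (norm x ^ 2)"
  using cinner_self_Re[of x] cinner_self_Im[of x] by (simp add: complex_eq_iff)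

lemma Re_cinner_sym: "Re (cinner y x) = Re (cinner x (y::'a::complex_inner))"
  by (subst cinner_commute) simp

lemma norm_add_sq: "norm (x + y) ^ 2 = norm x ^ 2 + norm y ^ 2 + 2 * Re (cinner x (y::'a::complex_inner))"
  by (simp add: cinner_self_Re cinner_add_left cinner_add_right Re_cinner_sym[of y x])

lemma norm_diff_sq: "norm (x - y) ^ 2 = norm x ^ 2 + norm y ^ 2 - 2 * Re (cinner x (y::'a::complex_inner))"
  by (simp add: cinner_self_Re cinner_diff_left cinner_diff_right Re_cinner_sym[of y x])

lemma norm_scaleC: "norm (scaleC a x) = cmod a * norm (x::'a::complex_inner)"
proof -
  have "norm (scaleC a x) ^ 2 = Re (cnj a * a * cinner x x)"
    by (simp only: cinner_self_Re cinner_scaleC_left cinner_scaleC_right mult.assoc)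
       (simp only: mult.left_commute)
  also have "\<dots> = (cmod a * norm x) ^ 2"
  proof -
    have e: "cnj a * a = complex_of_real (cmod a ^ 2)" by (metis complex_norm_square mult.commute)
    have "cnj a * a * cinner x x = complex_of_real (cmod a ^ 2 * norm x ^ 2)"
      unfolding e cinner_self by simp
    thus ?thesis by (simp add: power_mult_distrib)
  qed
  finally show ?thesis
    by (rule power2_eq_imp_eq) simp_all
qed

lemma Re_cinner_le: "\<bar>Re (cinner x y)\<bar> \<le> norm x * norm (y::'a::complex_inner)"
proof (cases "y = 0")
  case True thus ?thesis by simp
next
  case False
  define Y where "Y = norm y ^ 2"
  define r where "r = Re (cinner x y)"
  have Y: "Y > 0" using False by (simp add: Y_def)
  define t where "t = - r / Y"
  have "0 \<le> norm (x + t *\<^sub>R y) ^ 2" by simp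
  also have "\<dots> = norm x ^ 2 + t^2 * Y + 2 * t * r"
    by (simp add: norm_add_sq power_mult_distrib power2_abs cinner_scaleR_right Y_def r_def)
  also have "\<dots> = norm x ^ 2 - r^2 / Y"
    using Y by (simp add: t_def field_simps power2_eq_square)
  finally have "r^2 \<le> norm x ^ 2 * Y" using Y by (simp add: field_simps)
  hence "\<bar>r\<bar>^2 \<le> (norm x * norm y)^2" by (simp add: Y_def power_mult_distrib)
  thus ?thesis unfolding r_def by (rule power2_le_imp_le) simp
qed

lemma Cauchy_Schwarz: "cmod (cinner x y) \<le> norm x * norm (y::'a::complex_inner)"
proof (cases "cinner x y = 0")
  case True thus ?thesis by simp
next
  case False
  define c where "c = cinner x y"
  define w where "w = complex_of_real (1 / cmod c) * cnj c"
  have cw: "cmod w = 1" using False by (simp add: w_def c_def norm_mult norm_divide)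
  have "cinner x (scaleC w y) = w * c" by (simp add: cinner_scaleC_right c_def)
  also have "w * c = complex_of_real (cmod c)"
  proof -
    have "cnj c * c = complex_of_real (cmod c ^ 2)" using complex_norm_square[of c] by (simp add: ac_simps)
    hence "w * c = complex_of_real (1/cmod c * cmod c ^2)" by (simp add: w_def mult.assoc)
    also have "\<dots> = complex_of_real (cmod c)" using False by (simp add: power2_eq_square c_def)
    finally show ?thesis .
  qed
  finally have "cmod c = Re (cinner x (scaleC w y))" by simp
  also have "\<dots> \<le> norm x * norm (scaleC w y)" using Re_cinner_le[of x "scaleC w y"] by simp
  also have "\<dots> = norm x * norm y" by (simp add: norm_scaleC cw)
  finally show ?thesis unfolding c_def .
qed

lemma bounded_linear_cinner_right: "bounded_linear (\<lambda>y. cinner (x::'a::complex_inner) y)"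
proof (rule bounded_linear_intro[where K = "norm x"])
  fix y z show "cinner x (y + z) = cinner x y + cinner x z" by (rule cinner_add_right)
  fix r show "cinner x (r *\<^sub>R y) = r *\<^sub>R cinner x y"
    by (simp add: cinner_scaleR_right scaleR_conv_of_real)
  show "norm (cinner x y) \<le> norm y * norm x" using Cauchy_Schwarz[of x y] by (simp add: mult.commute)
qed

lemma bounded_linear_scaleC: "bounded_linear (\<lambda>x::'a::complex_inner. scaleC c x)"
proof (rule bounded_linear_intro[where K = "cmod c"])
  fix x y :: 'a show "scaleC c (x + y) = scaleC c x + scaleC c y" by (rule scaleC_add_right)
  fix r :: real show "scaleC c (r *\<^sub>R x) = r *\<^sub>R scaleC c x"
    by (simp add: scaleR_scaleC scaleC_scaleC mult.commute)
  show "norm (scaleC c x) \<le> norm x * cmod c" by (simp add: norm_scaleC mult.commute)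
qed

section \<open>Nearest points in closed subspaces\<close>

lemma Cauchy_dominated:
  assumes "Cauchy Y" "\<And>n k. dist (X n) (X k) \<le> dist (Y n) (Y k)"
  shows "Cauchy (X :: nat \<Rightarrow> 'b::metric_space)"
proof (rule metric_CauchyI)
  fix e :: real assume "0 < e"
  with assms(1) obtain M where "\<forall>m\<ge>M. \<forall>n\<ge>M. dist (Y m) (Y n) < e" by (meson metric_CauchyD)
  thus "\<exists>M. \<forall>m\<ge>M. \<forall>n\<ge>M. dist (X m) (X n) < e" using assms(2) by (meson order_le_less_trans)
qed

lemma parallelogram_law:
  "norm (a + b) ^ 2 + norm (a - b) ^ 2 = 2 * norm a ^ 2 + 2 * norm (b::'a::complex_inner) ^ 2"
  by (simp add: norm_add_sq norm_diff_sq)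

lemma minimizing_sequence_Cauchy:
  fixes s :: "nat \<Rightarrow> 'a::complex_inner"
  assumes mid: "\<And>a b. a \<in> M \<Longrightarrow> b \<in> M \<Longrightarrow> (1/2) *\<^sub>R (a + b) \<in> M"
    and lower: "\<And>m. m \<in> M \<Longrightarrow> d \<le> norm (x - m)" and d0: "0 \<le> d"
    and sM: "\<And>n. s n \<in> M" and sd: "\<And>n. norm (x - s n) < d + inverse (real (Suc n))"
  shows "Cauchy s"
proof -
  define e where "e = (\<lambda>n::nat. inverse (real (Suc n)))"
  have e0: "\<And>n. 0 < e n" and e1: "\<And>n. e n \<le> 1" by (auto simp: e_def field_simps)
  have sq: "norm (x - s n) ^ 2 \<le> d^2 + (2*d+1) * e n" for n
  proof -
    have "norm (x - s n) ^ 2 \<le> (d + e n) ^ 2"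
      using sd[of n] lower[OF sM[of n]] d0 by (intro power_mono) (auto simp: e_def)
    also have "\<dots> = d^2 + 2*d*e n + e n * e n" by (simp add: power2_eq_square algebra_simps)
    also have "\<dots> \<le> d^2 + (2*d+1) * e n"
      using e0[of n] e1[of n] by (simp add: mult_le_cancel_left1 algebra_simps)
    finally show ?thesis .
  qed
  \<comment> \<open>the midpoint of \<open>s n\<close> and \<open>s k\<close> is no closer to \<open>x\<close> than \<open>d\<close>\<close>
  have est: "norm (s n - s k) ^ 2 \<le> (4*d+2) * (e n + e k)" for n k
  proof -
    define a where "a = x - s n"
    define b where "b = x - s k"
    have "a + b = 2 *\<^sub>R (x - (1/2) *\<^sub>R (s n + s k))"
      by (simp add: a_def b_def algebra_simps scaleR_2)
    hence "2 * d \<le> norm (a + b)" using lower[OF mid[OF sM sM]] by simp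
    hence ab: "4 * d^2 \<le> norm (a + b) ^ 2"
      using d0 power_mono[of "2*d" "norm (a+b)" 2] by (simp add: power_mult_distrib)
    have "norm (s n - s k) = norm (a - b)" by (simp add: a_def b_def norm_minus_commute)
    hence "norm (s n - s k) ^ 2 = 2 * norm a ^ 2 + 2 * norm b ^ 2 - norm (a + b) ^ 2"
      using parallelogram_law[of a b] by simp
    thus ?thesis using sq[of n] sq[of k] ab unfolding a_def b_def by (simp add: algebra_simps)
  qed
  show "Cauchy s"
  proof (rule metric_CauchyI)
    fix eps :: real assume eps: "0 < eps"
    obtain K where K: "2 * (4*d+2) / eps^2 < real K" using reals_Archimedean2 by blast
    have "dist (s n) (s k) < eps" if "n \<ge> K" "k \<ge> K" for n k
    proof -
      have en: "e n \<le> e K" "e k \<le> e K" using that by (auto simp: e_def field_simps)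
      have "2 * (4*d+2) < real K * eps^2" using K eps by (simp add: field_simps)
      hence "e K * (2 * (4*d+2)) < e K * (real K * eps^2)" using e0[of K] by simp
      also have "e K * (real K * eps^2) \<le> eps^2" using eps by (simp add: e_def field_simps)
      finally have "(4*d+2) * (2 * e K) < eps^2" by (simp add: algebra_simps)
      moreover have "(4*d+2) * (e n + e k) \<le> (4*d+2) * (2 * e K)"
        using en d0 by (intro mult_left_mono) auto
      ultimately have "norm (s n - s k) ^ 2 < eps^2" using est[of n k] by simp
      hence "norm (s n - s k) < eps" using eps by (simp add: power_less_imp_less_base)
      thus ?thesis by (simp add: dist_norm)
    qed
    thus "\<exists>K. \<forall>n\<ge>K. \<forall>k\<ge>K. dist (s n) (s k) < eps" by blast
  qed
qed

lemma nearest_point_exists: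
  fixes M :: "'a::{complex_inner,complete_space} set"
  assumes "closed M" and "m0 \<in> M"
    and mid: "\<And>a b. a \<in> M \<Longrightarrow> b \<in> M \<Longrightarrow> (1/2) *\<^sub>R (a + b) \<in> M"
  shows "\<exists>m\<in>M. \<forall>y\<in>M. norm (x - m) \<le> norm (x - y)"
proof -
  define d where "d = (INF m\<in>M. norm (x - m))"
  have lower: "d \<le> norm (x - m)" if "m \<in> M" for m
    unfolding d_def by (rule cINF_lower[OF _ that]) (auto intro: bdd_belowI[of _ 0])
  have d0: "0 \<le> d"
    unfolding d_def using \<open>m0 \<in> M\<close> by (intro cINF_greatest) auto
  have "\<exists>m\<in>M. norm (x - m) < d + inverse (real (Suc n))" for n
  proof -
    have "(INF m\<in>M. norm (x - m)) < d + inverse (real (Suc n))" by (simp add: d_def)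
    thus ?thesis using \<open>m0 \<in> M\<close> by (subst (asm) cINF_less_iff) (auto intro: bdd_belowI[of _ 0])
  qed
  then obtain s where sM: "\<And>n. s n \<in> M" and sd: "\<And>n. norm (x - s n) < d + inverse (real (Suc n))"
    by metis
  obtain m where lim: "s \<longlonglongrightarrow> m"
    using Cauchy_convergent[OF minimizing_sequence_Cauchy[OF mid lower d0 sM sd]]
    by (auto simp: convergent_def)
  have mM: "m \<in> M" using \<open>closed M\<close> lim sM closed_sequentially by blast
  have "(\<lambda>n. norm (x - s n)) \<longlonglongrightarrow> norm (x - m)" by (intro tendsto_intros lim)
  hence "norm (x - m) \<le> d"
    by (rule LIMSEQ_le[OF _ LIMSEQ_inverse_real_of_nat_add[of d]]) (intro exI[of _ 0] allI impI less_imp_le sd)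
  thus ?thesis using mM lower by force
qed

lemma nearest_point_Re_cinner_eq_0:
  fixes x m y :: "'a::complex_inner"
  assumes "\<And>t::real. norm (x - m) \<le> norm (x - (m + t *\<^sub>R y))"
  shows "Re (cinner (x - m) y) = 0"
proof (cases "y = 0")
  case False
  define r where "r = Re (cinner (x - m) y)"
  define Y where "Y = norm y ^ 2"
  have Y: "0 < Y" using False by (simp add: Y_def)
  have "norm (x - m) ^ 2 \<le> norm ((x - m) - t *\<^sub>R y) ^ 2" for t
    using assms[of t] by (simp add: power_mono algebra_simps)
  hence "2 * t * r \<le> t^2 * Y" for t
    using \<open>norm (x - m) ^ 2 \<le> norm ((x - m) - t *\<^sub>R y) ^ 2\<close> by (simp add: mult.assoc norm_diff_sq power_mult_distrib power2_abs cinner_scaleR_right Y_def r_def)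
  from this[of "r / Y"] have "2 * r^2 / Y \<le> r^2 / Y"
    using Y by (simp add: power2_eq_square field_simps)
  hence "r^2 \<le> 0" using Y by (simp add: divide_le_cancel)
  thus ?thesis by (simp add: r_def)
qed simp

lemma closed_subspace_orthogonal_projection:
  fixes M :: "'a::{complex_inner,complete_space} set"
  assumes "closed M" and "0 \<in> M"
    and add: "\<And>a b. a \<in> M \<Longrightarrow> b \<in> M \<Longrightarrow> a + b \<in> M"
    and scale: "\<And>a r. a \<in> M \<Longrightarrow> r *\<^sub>R a \<in> M"
  shows "\<exists>m\<in>M. \<forall>y\<in>M. Re (cinner (x - m) y) = 0"
proof -
  obtain m where mM: "m \<in> M" and near: "\<forall>y\<in>M. norm (x - m) \<le> norm (x - y)"
    using nearest_point_exists[OF assms(1,2)] add scale by blast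
  have "Re (cinner (x - m) y) = 0" if "y \<in> M" for y
    by (rule nearest_point_Re_cinner_eq_0) (use near mM that add scale in blast)
  thus ?thesis using mM by blast
qed

section \<open>Self-adjoint operators\<close>

lemma adjoint_iff: "(g,h) \<in> adjoint T \<longleftrightarrow> (\<forall>f k. (f,k) \<in> T \<longrightarrow> cinner k g = cinner f h)"
  unfolding adjoint_def by (simp add: Ball_def split_paired_All)

lemma adjoint_closed: "closed (adjoint (T::('a::complex_inner) op))"
proof -
  have eq: "adjoint T = (\<Inter>p\<in>T. {q. cinner (snd p) (fst q) = cinner (fst p) (snd q)})"
  proof (rule set_eqI)
    fix q :: "'a \<times> 'a"
    show "q \<in> adjoint T \<longleftrightarrow> q \<in> (\<Inter>p\<in>T. {q. cinner (snd p) (fst q) = cinner (fst p) (snd q)})"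
      by (cases q) (simp add: adjoint_def case_prod_beta)
  qed
  show ?thesis unfolding eq
  proof (intro closed_INT ballI closed_Collect_eq)
    fix p :: "'a \<times> 'a"
    show "continuous_on UNIV (\<lambda>q::'a\<times>'a. cinner (snd p) (fst q))"
      by (intro linear_continuous_on bounded_linear_compose[OF bounded_linear_cinner_right bounded_linear_fst])
    show "continuous_on UNIV (\<lambda>q::'a\<times>'a. cinner (fst p) (snd q))"
      by (intro linear_continuous_on bounded_linear_compose[OF bounded_linear_cinner_right bounded_linear_snd])
  qed
qed

lemma self_adjoint_closed: "self_adjoint T \<Longrightarrow> closed (T::('a::complex_inner) op)"
  unfolding self_adjoint_def by (metis adjoint_closed)

lemma adjoint_zero: "(0, 0) \<in> adjoint (T::('a::complex_inner) op)"
  unfolding adjoint_iff by simp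

lemma adjoint_add:
  "(f1, g1) \<in> adjoint T \<Longrightarrow> (f2, g2) \<in> adjoint T \<Longrightarrow> (f1 + f2, g1 + g2) \<in> adjoint (T::('a::complex_inner) op)"
  unfolding adjoint_iff by (simp add: cinner_add_right)

lemma adjoint_diff:
  "(f1, g1) \<in> adjoint T \<Longrightarrow> (f2, g2) \<in> adjoint T \<Longrightarrow> (f1 - f2, g1 - g2) \<in> adjoint (T::('a::complex_inner) op)"
  unfolding adjoint_iff by (simp add: cinner_diff_right)

lemma adjoint_scaleC:
  "(f, g) \<in> adjoint T \<Longrightarrow> (scaleC c f, scaleC c g) \<in> adjoint (T::('a::complex_inner) op)"
  unfolding adjoint_iff by (simp add: cinner_scaleC_right)

lemma self_adjoint_zero: "self_adjoint T \<Longrightarrow> (0, 0) \<in> (T::('a::complex_inner) op)"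
  unfolding self_adjoint_def by (metis adjoint_zero)

lemma self_adjoint_add:
  "self_adjoint T \<Longrightarrow> (f1, g1) \<in> T \<Longrightarrow> (f2, g2) \<in> T \<Longrightarrow> (f1 + f2, g1 + g2) \<in> (T::('a::complex_inner) op)"
  unfolding self_adjoint_def by (metis adjoint_add)

lemma self_adjoint_diff:
  "self_adjoint T \<Longrightarrow> (f1, g1) \<in> T \<Longrightarrow> (f2, g2) \<in> T \<Longrightarrow> (f1 - f2, g1 - g2) \<in> (T::('a::complex_inner) op)"
  unfolding self_adjoint_def by (metis adjoint_diff)

lemma self_adjoint_scaleC:
  "self_adjoint T \<Longrightarrow> (f, g) \<in> T \<Longrightarrow> (scaleC c f, scaleC c g) \<in> (T::('a::complex_inner) op)"
  unfolding self_adjoint_def by (metis adjoint_scaleC)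

lemma self_adjoint_symmetric:
  "self_adjoint T \<Longrightarrow> (f, g) \<in> T \<Longrightarrow> (f', g') \<in> T \<Longrightarrow> cinner g f' = cinner f (g'::'a::complex_inner)"
  unfolding self_adjoint_def by (metis adjoint_iff)

lemma self_adjoint_norm_plus_i:
  assumes "self_adjoint A" "(f, g) \<in> A"
  shows "norm (g + scaleC \<i> f) ^ 2 = norm g ^ 2 + norm (f::'a::complex_inner) ^ 2"
proof -
  have "cinner g f = cnj (cinner g f)"
    using self_adjoint_symmetric[OF assms(1,2,2)] cinner_commute[of f g] by simp
  hence "Im (cinner g f) = 0" by (metis cnj.simps(2) neg_equal_zero)
  hence "Re (cinner g (scaleC \<i> f)) = 0" by (simp add: cinner_scaleC_right)
  thus ?thesis by (simp add: norm_add_sq norm_scaleC)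
qed

lemma self_adjoint_norm_le_plus_i:
  assumes "self_adjoint A" "(f, g) \<in> A"
  shows "norm f \<le> norm (g + scaleC \<i> f)" "norm g \<le> norm (g + scaleC \<i> (f::'a::complex_inner))"
  using self_adjoint_norm_plus_i[OF assms] by (auto intro: power2_le_imp_le)

lemma self_adjoint_closed_range_plus_i:
  fixes A :: "('a::{complex_inner,complete_space}) op"
  assumes sa: "self_adjoint A"
  shows "closed {g + scaleC \<i> f | f g. (f, g) \<in> A}" (is "closed ?M")
  unfolding closed_sequential_limits
proof (intro allI impI, elim conjE)
  fix y l assume yM: "\<forall>n. y n \<in> ?M" and yl: "y \<longlonglongrightarrow> l"
  have "\<forall>n. \<exists>f g. (f, g) \<in> A \<and> y n = g + scaleC \<i> f" using yM by blast
  then obtain F G where FG: "\<And>n. (F n, G n) \<in> A" and yFG: "\<And>n. y n = G n + scaleC \<i> (F n)"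
    by metis
  \<comment> \<open>\<open>A + i\<close> is bounded below, so the preimages of a Cauchy sequence form Cauchy sequences\<close>
  have dist_le: "dist (F n) (F k) \<le> dist (y n) (y k) \<and> dist (G n) (G k) \<le> dist (y n) (y k)" for n k
  proof -
    have "y n - y k = (G n - G k) + scaleC \<i> (F n - F k)"
      by (simp add: yFG scaleC_diff_right algebra_simps)
    thus ?thesis
      using self_adjoint_norm_le_plus_i[OF sa self_adjoint_diff[OF sa FG FG]] by (simp add: dist_norm)
  qed
  have Cy: "Cauchy y" using yl by (rule LIMSEQ_imp_Cauchy)
  have "Cauchy F" "Cauchy G" using Cauchy_dominated[OF Cy] dist_le by blast+
  then obtain F0 G0 where F0: "F \<longlonglongrightarrow> F0" and G0: "G \<longlonglongrightarrow> G0"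
    using Cauchy_convergent convergent_def by metis
  have "(\<lambda>n. (F n, G n)) \<longlonglongrightarrow> (F0, G0)" using F0 G0 by (rule tendsto_Pair)
  hence inA: "(F0, G0) \<in> A"
    by (rule closed_sequentially[OF self_adjoint_closed[OF sa], rotated]) (simp add: FG)
  have "(\<lambda>n. G n + scaleC \<i> (F n)) \<longlonglongrightarrow> G0 + scaleC \<i> F0"
    by (intro tendsto_add G0 bounded_linear.tendsto[OF bounded_linear_scaleC] F0)
  moreover have "y = (\<lambda>n. G n + scaleC \<i> (F n))" using yFG by blast
  ultimately have "y \<longlonglongrightarrow> G0 + scaleC \<i> F0" by simp
  hence "l = G0 + scaleC \<i> F0" using yl LIMSEQ_unique by blast
  thus "l \<in> ?M" using inA by blast
qed

lemma self_adjoint_range_plus_i: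
  fixes A :: "('a::{complex_inner,complete_space}) op"
  assumes sa: "self_adjoint A"
  shows "\<exists>f g. (f, g) \<in> A \<and> g + scaleC \<i> f = w"
proof -
  define M where "M = {g + scaleC \<i> f | f g. (f, g) \<in> A}"
  have inM: "\<And>f g. (f, g) \<in> A \<Longrightarrow> g + scaleC \<i> f \<in> M" by (auto simp: M_def)
  have M_add: "a + b \<in> M" if ab: "a \<in> M" "b \<in> M" for a b
  proof -
    obtain f1 g1 f2 g2 where "(f1, g1) \<in> A" "(f2, g2) \<in> A"
      and "a = g1 + scaleC \<i> f1" "b = g2 + scaleC \<i> f2"
      using ab unfolding M_def by blast
    thus ?thesis
      using inM[OF self_adjoint_add[OF sa]] by (simp add: scaleC_add_right algebra_simps)
  qed
  have M_scaleC: "scaleC c a \<in> M" if a: "a \<in> M" for a c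
  proof -
    obtain f g where fg: "(f, g) \<in> A" "a = g + scaleC \<i> f" using a unfolding M_def by blast
    have "scaleC c g + scaleC \<i> (scaleC c f) = scaleC c a"
      by (simp add: fg(2) scaleC_add_right scaleC_scaleC mult.commute)
    thus ?thesis using inM[OF self_adjoint_scaleC[OF sa fg(1)]] by metis
  qed
  have "\<exists>m\<in>M. \<forall>y\<in>M. Re (cinner (w - m) y) = 0"
  proof (rule closed_subspace_orthogonal_projection)
    show "closed M" unfolding M_def by (rule self_adjoint_closed_range_plus_i[OF sa])
    show "0 \<in> M" using inM[OF self_adjoint_zero[OF sa]] by simp
  qed (simp_all add: M_add M_scaleC scaleR_scaleC)
  then obtain m where mM: "m \<in> M" and orth: "\<forall>y\<in>M. Re (cinner (w - m) y) = 0"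
    by blast
  define z where "z = w - m"
  \<comment> \<open>\<open>z\<close> is orthogonal to the range of \<open>A + i\<close>, i.e. \<open>A z = i z\<close>, which forces \<open>z = 0\<close>\<close>
  have "(z, scaleC \<i> z) \<in> adjoint A"
    unfolding adjoint_iff
  proof (intro allI impI)
    fix f k assume fk: "(f, k) \<in> A"
    define u where "u = k + scaleC \<i> f"
    have uM: "u \<in> M" using inM[OF fk] by (simp add: u_def)
    have "Re (cinner z u) = 0" "Re (cinner z (scaleC \<i> u)) = 0"
      using orth uM M_scaleC[OF uM] by (simp_all add: z_def)
    hence "cinner z u = 0" by (simp add: cinner_scaleC_right complex_eq_iff)
    hence "cinner z k = - (\<i> * cinner z f)"
      by (simp add: u_def cinner_add_right cinner_scaleC_right add_eq_0_iff)
    hence "cinner k z = cnj (- (\<i> * cinner z f))" by (metis cinner_commute)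
    also have "\<dots> = \<i> * cinner f z" using cinner_commute[of f z] by simp
    finally show "cinner k z = cinner f (scaleC \<i> z)" by (simp add: cinner_scaleC_right)
  qed
  hence zA: "(z, scaleC \<i> z) \<in> A" using sa by (simp add: self_adjoint_def)
  have "- \<i> * cinner z z = \<i> * cinner z z"
    using self_adjoint_symmetric[OF sa zA zA] by (simp add: cinner_scaleC_left cinner_scaleC_right)
  hence "z = 0" by (simp add: cinner_eq_zero)
  thus ?thesis using mM by (auto simp: M_def z_def)
qed

lemma self_adjoint_dense_domain_square:
  fixes A :: "('a::{complex_inner,complete_space}) op"
  assumes sa: "self_adjoint A"
  shows "closure (Domain (A O A)) = UNIV"
proof -
  have approx: "\<exists>y'\<in>Domain A. dist y' y < e" if "0 < e" for y e
  proof -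
    have "y \<in> closure (Domain A)" using sa by (simp add: self_adjoint_def)
    thus ?thesis using that by (simp add: closure_approachable)
  qed
  have "\<exists>z\<in>Domain (A O A). dist z y < e" if e: "0 < e" for y e
  proof -
    obtain y' a where ya: "(y', a) \<in> A" and y'y: "dist y' y < e/2"
      using approx[of "e/2"] e by fastforce
    obtain w' c where w'c: "(w', c) \<in> A" and w'w: "dist w' (a + scaleC \<i> y') < e/2"
      using approx[of "e/2"] e by fastforce
    obtain z b where zb: "(z, b) \<in> A" and bw: "b + scaleC \<i> z = w'"
      using self_adjoint_range_plus_i[OF sa] by blast
    \<comment> \<open>\<open>A z = w' - i z\<close> lies in the domain of \<open>A\<close>\<close>
    have "(w' - scaleC \<i> z, c - scaleC \<i> b) \<in> A"
      using self_adjoint_diff[OF sa w'c self_adjoint_scaleC[OF sa zb]] .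
    moreover have "w' - scaleC \<i> z = b" using bw by (simp add: algebra_simps)
    ultimately have "(b, c - scaleC \<i> b) \<in> A" by simp
    hence zD: "z \<in> Domain (A O A)" using zb by blast
    have shift: "w' - (a + scaleC \<i> y') = (b - a) + scaleC \<i> (z - y')"
      using bw by (simp add: scaleC_diff_right algebra_simps)
    have "dist z y' \<le> dist w' (a + scaleC \<i> y')"
      unfolding dist_norm shift by (rule self_adjoint_norm_le_plus_i(1)[OF sa self_adjoint_diff[OF sa zb ya]])
    hence "dist z y < e" using dist_triangle[of z y y'] y'y w'w by linarith
    thus ?thesis using zD by blast
  qed
  thus ?thesis by (auto simp: closure_approachable)
qed

section \<open>Resolvents and cores\<close>

lemma resolvent_iff: "(f, x) \<in> resolvent B lam \<longleftrightarrow> (\<exists>g. (x, g) \<in> B \<and> f = g - scaleC lam x)"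
  unfolding resolvent_def op_shift_def by auto

lemma resolvent_set_resolvent_exists: "lam \<in> resolvent_set B \<Longrightarrow> \<exists>x. (f, x) \<in> resolvent B lam"
  unfolding resolvent_set_def by auto

lemma resolvent_set_resolvent_unique:
  "lam \<in> resolvent_set B \<Longrightarrow> (f, x) \<in> resolvent B lam \<Longrightarrow> (f, x') \<in> resolvent B lam \<Longrightarrow> x = x'"
  unfolding resolvent_set_def single_valued_def by blast

lemma resolvent_intertwining:
  assumes "q \<noteq> 0" and "\<alpha> * q \<in> resolvent_set B"
    and incl: "op_comp (resolvent B \<alpha>) A \<subseteq> op_smult q (op_comp A (resolvent B (\<alpha> * q)))"
    and "(f, g) \<in> A" "(g, d) \<in> resolvent B \<alpha>" "(f, x) \<in> resolvent B (\<alpha> * q)"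
  shows "(x, scaleC (inverse q) d) \<in> A"
proof -
  have "(f, d) \<in> op_comp (resolvent B \<alpha>) A" unfolding op_comp_def using assms(4,5) by blast
  with incl obtain x' d' where "(f, x') \<in> resolvent B (\<alpha> * q)" "(x', d') \<in> A" "d = scaleC q d'"
    unfolding op_smult_def op_comp_def by blast
  moreover have "x' = x" using resolvent_set_resolvent_unique assms(2,6) calculation(1) by blast
  ultimately show ?thesis using \<open>q \<noteq> 0\<close> by (simp add: scaleC_scaleC scaleC_one)
qed

lemma resolvent_set_graph_dist_le:
  fixes B :: "('a::complex_inner) op"
  assumes sa: "self_adjoint B" and lam: "lam \<in> resolvent_set B"
  obtains C where "0 < C"
    and "\<And>x y x' y'. (x, y) \<in> B \<Longrightarrow> (x', y') \<in> B \<Longrightarrow>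
           dist (x', y') (x, y) \<le> C * dist (y' - scaleC lam x') (y - scaleC lam x)"
proof -
  obtain K where K: "\<forall>(a, b) \<in> resolvent B lam. norm b \<le> K * norm a"
    using lam unfolding resolvent_set_def by blast
  define C where "C = 1 + (\<bar>K\<bar> + 1) * (1 + cmod lam)"
  have "dist (x', y') (x, y) \<le> C * dist (y' - scaleC lam x') (y - scaleC lam x)"
    if "(x, y) \<in> B" "(x', y') \<in> B" for x y x' y'
  proof -
    define h where "h = (y' - scaleC lam x') - (y - scaleC lam x)"
    have "h = (y' - y) - scaleC lam (x' - x)" by (simp add: h_def scaleC_diff_right)
    hence "(h, x' - x) \<in> resolvent B lam"
      using self_adjoint_diff[OF sa that(2,1)] resolvent_iff by blast
    hence "norm (x' - x) \<le> K * norm h" using K by blast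
    also have "\<dots> \<le> (\<bar>K\<bar> + 1) * norm h" by (intro mult_right_mono) auto
    finally have nx: "norm (x' - x) \<le> (\<bar>K\<bar> + 1) * norm h" .
    have "y' - y = h + scaleC lam (x' - x)" by (simp add: h_def scaleC_diff_right)
    hence "norm (y' - y) \<le> norm h + cmod lam * norm (x' - x)"
      using norm_triangle_ineq[of h "scaleC lam (x' - x)"] by (simp add: norm_scaleC)
    also have "\<dots> \<le> norm h + cmod lam * ((\<bar>K\<bar> + 1) * norm h)"
      using nx by (simp add: mult_left_mono)
    finally have "norm (x' - x) + norm (y' - y) \<le> C * norm h"
      using nx by (simp add: C_def algebra_simps)
    moreover have "dist (x', y') (x, y) \<le> dist x' x + dist y' y"
      unfolding dist_Pair_Pair by (rule sqrt_sum_squares_le_sum) simp_all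
    ultimately show ?thesis by (simp add: h_def dist_norm)
  qed
  moreover have "0 < C" by (simp add: C_def add_pos_nonneg)
  ultimately show ?thesis using that by blast
qed

lemma is_core_of_resolvent_image:
  fixes B :: "('a::complex_inner) op"
  assumes sa: "self_adjoint B" and lam: "lam \<in> resolvent_set B" and dense: "closure E = UNIV"
    and image: "\<And>f x. f \<in> E \<Longrightarrow> (f, x) \<in> resolvent B lam \<Longrightarrow> x \<in> D"
    and "D \<subseteq> Domain B"
  shows "is_core D B"
proof -
  define S where "S = {(f, g) \<in> B. f \<in> D}"
  have "closure S \<subseteq> B"
    using closure_mono[of S B] closure_closed[OF self_adjoint_closed[OF sa]] by (auto simp: S_def)
  moreover have "(x, y) \<in> closure S" if xy: "(x, y) \<in> B" for x y
    unfolding closure_approachable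
  proof (intro allI impI)
    fix eps :: real assume "0 < eps"
    obtain C where "0 < C" and C: "\<And>x y x' y'. (x, y) \<in> B \<Longrightarrow> (x', y') \<in> B \<Longrightarrow>
        dist (x', y') (x, y) \<le> C * dist (y' - scaleC lam x') (y - scaleC lam x)"
      using resolvent_set_graph_dist_le[OF sa lam] by blast
    have "y - scaleC lam x \<in> closure E" using dense by simp
    then obtain f where fE: "f \<in> E" and f: "dist f (y - scaleC lam x) < eps / C"
      using \<open>0 < C\<close> \<open>0 < eps\<close> by (meson closure_approachable divide_pos_pos)
    obtain x' where fx': "(f, x') \<in> resolvent B lam"
      using resolvent_set_resolvent_exists[OF lam] by blast
    then obtain y' where x'y': "(x', y') \<in> B" and "f = y' - scaleC lam x'"
      using resolvent_iff by blast
    hence "dist (x', y') (x, y) \<le> C * dist f (y - scaleC lam x)" using C[OF xy x'y'] by simp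
    also have "\<dots> < eps" using f \<open>0 < C\<close> by (simp add: field_simps)
    finally show "\<exists>p\<in>S. dist p (x, y) < eps"
      using x'y' image[OF fE fx'] unfolding S_def by blast
  qed
  ultimately show ?thesis
    unfolding is_core_def S_def[symmetric] using \<open>D \<subseteq> Domain B\<close> by auto
qed

lemma resolvent_domain_square_subset_Dp:
  fixes q mu :: complex and A B :: "('a::complex_inner) op"
  assumes "q \<noteq> 0" and saA: "self_adjoint A" and saB: "self_adjoint B"
    and r1: "mu \<in> resolvent_set B" and r2: "mu * q \<in> resolvent_set B"
    and r3: "mu * q ^ 2 \<in> resolvent_set B"
    and h1: "op_comp (resolvent B mu) A \<subseteq> op_smult q (op_comp A (resolvent B (mu * q)))"
    and h2: "op_comp (resolvent B (mu * q)) A \<subseteq> op_smult q (op_comp A (resolvent B (mu * q ^ 2)))"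
    and "f \<in> Domain (A O A)" and fx: "(f, x) \<in> resolvent B (mu * q ^ 2)"
  shows "x \<in> Dp (q ^ 2) (op_comp A A) B"
proof -
  define lam where "lam = mu * q ^ 2"
  define p where "p = inverse q ^ 2"
  obtain f1 f2 where ff1: "(f, f1) \<in> A" and f1f2: "(f1, f2) \<in> A" using \<open>f \<in> Domain (A O A)\<close> by blast
  obtain c where f1c: "(f1, c) \<in> resolvent B (mu * q)" using resolvent_set_resolvent_exists[OF r2] by blast
  obtain d where f2d: "(f2, d) \<in> resolvent B mu" using resolvent_set_resolvent_exists[OF r1] by blast
  have Ax: "(x, scaleC (inverse q) c) \<in> A"
    using resolvent_intertwining[of q "mu * q", OF \<open>q \<noteq> 0\<close> _ _ ff1 f1c] r3 h2 fx
    by (simp add: power2_eq_square mult.assoc)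
  have Ac: "(c, scaleC (inverse q) d) \<in> A"
    by (rule resolvent_intertwining[OF \<open>q \<noteq> 0\<close> r2 h1 f1f2 f2d f1c])
  have A2x: "(scaleC (inverse q) c, scaleC p d) \<in> A"
    using self_adjoint_scaleC[OF saA Ac, of "inverse q"] by (simp add: p_def scaleC_scaleC power2_eq_square)
  obtain gx where xgx: "(x, gx) \<in> B" and "f = gx - scaleC lam x"
    using fx resolvent_iff unfolding lam_def by blast
  hence "gx = f + scaleC lam x" by simp
  hence "(gx, f1 + scaleC lam (scaleC (inverse q) c)) \<in> A"
    using self_adjoint_add[OF saA ff1 self_adjoint_scaleC[OF saA Ax]] by simp
  moreover have "(f1 + scaleC lam (scaleC (inverse q) c), f2 + scaleC lam (scaleC p d)) \<in> A"
    by (rule self_adjoint_add[OF saA f1f2 self_adjoint_scaleC[OF saA A2x]])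
  ultimately have A2Bx: "(x, f2 + scaleC lam (scaleC p d)) \<in> op_comp (op_comp A A) B"
    unfolding op_comp_def using xgx by blast
  obtain gd where dgd: "(d, gd) \<in> B" and "f2 = gd - scaleC mu d"
    using f2d resolvent_iff by blast
  have BA2x: "(x, scaleC p gd) \<in> op_comp B (op_comp A A)"
    unfolding op_comp_def using Ax A2x self_adjoint_scaleC[OF saB dgd] by blast
  \<comment> \<open>\<open>\<lambda> q^-2 = \<mu>\<close>, so both sides equal \<open>B R_\<mu>(B) A^2 f\<close>\<close>
  have "lam * p = mu" "q ^ 2 * p = 1" using \<open>q \<noteq> 0\<close>
    by (simp_all add: lam_def p_def power_mult_distrib[symmetric])
  hence "f2 + scaleC lam (scaleC p d) = scaleC (q ^ 2) (scaleC p gd)"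
    using \<open>f2 = gd - scaleC mu d\<close> by (simp add: scaleC_scaleC scaleC_one)
  thus ?thesis unfolding Dp_def using A2Bx BA2x by blast
qed

theorem mainTheorem6:
  fixes q mu :: complex
    and A B :: "('a::{complex_inner, complete_space}) op"
  assumes "cmod q = 1" and "q ^ 2 \<noteq> 1"
    and "self_adjoint A" and "self_adjoint B"
    and "mu \<in> resolvent_set B" and "mu * q \<in> resolvent_set B"
    and "mu * q ^ 2 \<in> resolvent_set B"
    and "op_comp (resolvent B mu) A \<subseteq> op_smult q (op_comp A (resolvent B (mu * q)))"
    and "op_comp (resolvent B (mu * q)) A \<subseteq> op_smult q (op_comp A (resolvent B (mu * q ^ 2)))"
  shows "is_core (Dp (q ^ 2) (op_comp A A) B) B"
proof (rule is_core_of_resolvent_image)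
  show "self_adjoint B" "mu * q ^ 2 \<in> resolvent_set B" by fact+
  show "closure (Domain (A O A)) = UNIV"
    by (rule self_adjoint_dense_domain_square[OF \<open>self_adjoint A\<close>])
  have "q \<noteq> 0" using \<open>cmod q = 1\<close> by auto
  then show "\<And>f x. f \<in> Domain (A O A) \<Longrightarrow> (f, x) \<in> resolvent B (mu * q ^ 2) \<Longrightarrow>
      x \<in> Dp (q ^ 2) (op_comp A A) B"
    using resolvent_domain_square_subset_Dp assms(3-9) by blast
  show "Dp (q ^ 2) (op_comp A A) B \<subseteq> Domain B"
    unfolding Dp_def op_comp_def by blast
qed

end
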